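(* Let $N \ge \Delta \geq 2$ be integers. There exists a connected graph $G$ with $e(G)=N$, $\Delta(G)=\Delta$ and $e(L(G)) = f(N,\Delta)$; furthermore $n(G) \leq N+1$.
   Context: All graphs are finite and simple; $L(G)$ is the line graph of $G$; $n(\cdot)$, $e(\cdot)$, $\Delta(\cdot)$, $\delta(\cdot)$ denote number of vertices, number of edges, maximum degree and minimum degree. For integers $N \ge \Delta \ge 1$, $f(N,\Delta) = \max\{ e(L(G)) : e(G)=N, \Delta(G)=\Delta, \delta(G)\geq 1\}$, the maximum over all simple graphs $G$. *)

theory Defs
  imports Main
begin

definition simple_graph :: "nat set \<Rightarrow> nat set set \<Rightarrow> bool" where
  "simple_graph V E \<longleftrightarrow> finite V \<and> (\<forall>e\<in>E. e \<subseteq> V \<and> card e = 2)"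

definition num_vertices :: "nat set \<Rightarrow> nat set set \<Rightarrow> nat" where
  "num_vertices V E = card V"

definition num_edges :: "nat set \<Rightarrow> nat set set \<Rightarrow> nat" where
  "num_edges V E = card E"

definition degree :: "nat set set \<Rightarrow> nat \<Rightarrow> nat" where
  "degree E v = card {e \<in> E. v \<in> e}"

definition max_degree :: "nat set \<Rightarrow> nat set set \<Rightarrow> nat" where
  "max_degree V E = Max (degree E ` V)"

definition min_degree :: "nat set \<Rightarrow> nat set set \<Rightarrow> nat" where
  "min_degree V E = Min (degree E ` V)"

definition line_graph_edges :: "nat set set \<Rightarrow> nat set set set" where
  "line_graph_edges E = {{e1, e2} | e1 e2. e1 \<in> E \<and> e2 \<in> E \<and> e1 \<noteq> e2 \<and> e1 \<inter> e2 \<noteq> {}}"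

definition line_graph :: "nat set \<Rightarrow> nat set set \<Rightarrow> nat set set \<times> nat set set set" where
  "line_graph V E = (E, line_graph_edges E)"

definition connected_graph :: "nat set \<Rightarrow> nat set set \<Rightarrow> bool" where
  "connected_graph V E \<longleftrightarrow> V \<noteq> {} \<and>
     (\<forall>u\<in>V. \<forall>v\<in>V. (\<lambda>x y. {x, y} \<in> E)\<^sup>*\<^sup>* u v)"

definition f_max :: "nat \<Rightarrow> nat \<Rightarrow> nat" where
  "f_max N D = Max {card (snd (line_graph V E)) | V E.
      simple_graph V E \<and> num_edges V E = N \<and> max_degree V E = D \<and> min_degree V E \<ge> 1}"

end

(*
  Since e(L(G)) is the sum of the binomial coefficients C(d(v), 2) over the vertices, it only
  depends on the degree sequence. Start from a graph attaining f(N, D). While it is disconnected,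
  pick vertices a, c in different components. If some x linked to a and y linked to c satisfy
  d(x) + d(y) <= D, identify y with x: the number of edges is kept, the maximum degree stays D,
  and since C(s, 2) + C(t, 2) <= C(s + t, 2) the line graph does not lose edges. Otherwise, as
  D >= 2, one of the two components has minimum degree at least two and so contains a cycle
  through some edge pq; replacing pq and an edge cd of the other component by pc and qd keeps
  all degrees. Both operations strictly decrease the number of unlinked pairs of vertices, so
  the process ends in a connected extremal graph, and a connected graph with N edges has at most
  N + 1 vertices.
*)

theory Submission
  imports Defs
begin

abbreviation reach :: "nat set set \<Rightarrow> nat \<Rightarrow> nat \<Rightarrow> bool" where
  "reach E \<equiv> (\<lambda>x y. {x, y} \<in> E)\<^sup>*\<^sup>*"

lemma reach_edge: "{x, y} \<in> E \<Longrightarrow> reach E x y"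
  by auto

lemma reach_sym: "reach E x y \<Longrightarrow> reach E y x"
proof (induction rule: rtranclp_induct)
  case (step y z)
  then have "reach E z y" by (simp add: insert_commute reach_edge)
  then show ?case using step.IH by (rule rtranclp_trans)
qed simp

lemma reach_lift:
  assumes "\<And>x y. {x, y} \<in> E \<Longrightarrow> reach F x y" and "reach E a b"
  shows "reach F a b"
  using assms(2)
proof (induction rule: rtranclp_induct)
  case (step y z)
  then show ?case using assms(1) by (blast intro: rtranclp_trans)
qed simp

lemma reach_mono: "E \<subseteq> F \<Longrightarrow> reach E a b \<Longrightarrow> reach F a b"
  by (rule reach_lift[of E F]) auto

lemma reach_image:
  assumes "\<And>x y. {x, y} \<in> E \<Longrightarrow> {g x, g y} \<in> F" and "reach E a b"
  shows "reach F (g a) (g b)"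
  using assms(2)
  by (induction rule: rtranclp_induct) (use assms(1) in \<open>auto intro: rtranclp.rtrancl_into_rtrancl\<close>)

lemma reach_walk:
  assumes "\<And>k. i \<le> k \<Longrightarrow> k < j \<Longrightarrow> {w k, w (Suc k)} \<in> E" and "i \<le> j"
  shows "reach E (w i) (w j)"
  using assms(2,1) by (induction rule: dec_induct) (auto intro: rtranclp.rtrancl_into_rtrancl)

lemma reach_Diff_edge:
  assumes "reach E x y" and "\<And>z. reach E x z \<Longrightarrow> z \<notin> e"
  shows "reach (E - {e}) x y"
  using assms(1)
proof (induction rule: rtranclp_induct)
  case (step y z)
  then have "{y, z} \<in> E - {e}" using assms(2) by blast
  with step.IH show ?case by (rule rtranclp.rtrancl_into_rtrancl)
qed simp

definition unlinked_pairs :: "nat set \<Rightarrow> nat set set \<Rightarrow> (nat \<times> nat) set" where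
  "unlinked_pairs V E = {(x, y) \<in> V \<times> V. \<not> reach E x y}"

lemma card_unlinked_pairs_less:
  assumes "finite V" "V' \<subseteq> V"
    and "\<And>x y. x \<in> V' \<Longrightarrow> y \<in> V' \<Longrightarrow> reach E x y \<Longrightarrow> reach E' x y"
    and "x \<in> V'" "y \<in> V'" "\<not> reach E x y" "reach E' x y"
  shows "card (unlinked_pairs V' E') < card (unlinked_pairs V E)"
proof (rule psubset_card_mono)
  have "unlinked_pairs V E \<subseteq> V \<times> V" unfolding unlinked_pairs_def by blast
  then show "finite (unlinked_pairs V E)" using assms(1) finite_subset by blast
  have "unlinked_pairs V' E' \<subseteq> unlinked_pairs V E"
    using assms(2,3) unfolding unlinked_pairs_def by auto
  moreover have "(x, y) \<in> unlinked_pairs V E - unlinked_pairs V' E'"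
    using assms(2,4-) unfolding unlinked_pairs_def by auto
  ultimately show "unlinked_pairs V' E' \<subset> unlinked_pairs V E" by blast
qed

lemma simple_graph_finite_edges: "simple_graph V E \<Longrightarrow> finite E"
  unfolding simple_graph_def by (meson Pow_iff finite_Pow_iff rev_finite_subset subsetI)

lemma simple_graph_edge_doubleton:
  assumes "simple_graph V E" "e \<in> E" "v \<in> e"
  obtains w where "e = {v, w}" "w \<noteq> v"
proof -
  have "card e = 2" using assms unfolding simple_graph_def by auto
  then obtain x y where "e = {x, y}" "x \<noteq> y" by (auto simp: card_2_iff)
  then show ?thesis using assms(3) that by (auto simp: insert_commute)
qed

lemma simple_graph_edgeD:
  assumes "simple_graph V E" "{x, y} \<in> E"
  shows "x \<noteq> y" "x \<in> V" "y \<in> V"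
  using assms unfolding simple_graph_def by (auto simp: card_insert_if split: if_splits)

lemma reach_closed:
  assumes "simple_graph V E" "a \<in> V" "reach E a b"
  shows "b \<in> V"
  using assms(3) by induction (use assms simple_graph_edgeD in auto)

lemma degree_pos_iff: "degree E v \<ge> 1 \<longleftrightarrow> (\<exists>e\<in>E. v \<in> e)" if "finite E"
  using that unfolding degree_def by (auto simp: Suc_le_eq card_gt_0_iff)

lemma degree_pos_neighbour:
  assumes "simple_graph V E" "degree E v \<ge> 1"
  obtains w where "{v, w} \<in> E"
  using assms degree_pos_iff[OF simple_graph_finite_edges[OF assms(1)]]
  by (metis simple_graph_edge_doubleton)

lemma degree_two_other_neighbour:
  assumes "simple_graph V E" "degree E v \<ge> 2"
  obtains w where "{v, w} \<in> E" "w \<noteq> u"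
proof -
  have "\<not> {e \<in> E. v \<in> e} \<subseteq> {{v, u}}"
    using assms(2) card_mono[of "{{v, u}}" "{e \<in> E. v \<in> e}"] unfolding degree_def by auto
  then obtain e where "e \<in> E" "v \<in> e" "e \<noteq> {v, u}" by blast
  then show ?thesis using that by (metis assms(1) simple_graph_edge_doubleton)
qed

lemma choose_two_add_le: "(a choose 2) + (b choose 2) \<le> ((a + b) choose 2)"
proof (induction b)
  case (Suc b)
  have "(Suc b choose 2) = b + (b choose 2)" "((a + Suc b) choose 2) = (a + b) + ((a + b) choose 2)"
    by (simp_all add: numeral_2_eq_2)
  then show ?case using Suc by linarith
qed simp

lemma card_common_vertices_line_graph_edge:
  assumes "simple_graph V E" "P \<in> line_graph_edges E"
  shows "card {v \<in> V. v \<in> \<Inter>P} = 1"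
proof -
  obtain e1 e2 where P: "P = {e1, e2}" "e1 \<in> E" "e2 \<in> E" "e1 \<noteq> e2" "e1 \<inter> e2 \<noteq> {}"
    using assms(2) unfolding line_graph_edges_def by blast
  obtain x where x: "x \<in> e1" "x \<in> e2" using P(5) by blast
  obtain y1 where "e1 = {x, y1}" using simple_graph_edge_doubleton[OF assms(1) P(2) x(1)] .
  moreover obtain y2 where "e2 = {x, y2}" using simple_graph_edge_doubleton[OF assms(1) P(3) x(2)] .
  moreover have "x \<in> V" using assms(1) P(2) x(1) unfolding simple_graph_def by auto
  ultimately have "{v \<in> V. v \<in> \<Inter>P} = {x}" using P(1,4) by auto
  then show ?thesis by simp
qed

lemma line_graph_edges_through:
  "{P \<in> line_graph_edges E. v \<in> \<Inter>P} = {S. S \<subseteq> {e \<in> E. v \<in> e} \<and> card S = 2}"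
proof (intro equalityI subsetI)
  fix P assume P: "P \<in> {P \<in> line_graph_edges E. v \<in> \<Inter>P}"
  then obtain e1 e2 where "P = {e1, e2}" "e1 \<in> E" "e2 \<in> E" "e1 \<noteq> e2"
    unfolding line_graph_edges_def by blast
  with P show "P \<in> {S. S \<subseteq> {e \<in> E. v \<in> e} \<and> card S = 2}" by auto
next
  fix S assume "S \<in> {S. S \<subseteq> {e \<in> E. v \<in> e} \<and> card S = 2}"
  then obtain e1 e2 where "S = {e1, e2}" "e1 \<noteq> e2" "e1 \<in> E" "e2 \<in> E" "v \<in> e1" "v \<in> e2"
    by (auto simp: card_2_iff)
  then show "S \<in> {P \<in> line_graph_edges E. v \<in> \<Inter>P}"
    unfolding line_graph_edges_def by auto
qed

text \<open>Double counting of the pairs (vertex, pair of edges meeting at it).\<close>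

lemma card_line_graph_edges:
  assumes "simple_graph V E"
  shows "card (line_graph_edges E) = (\<Sum>v\<in>V. degree E v choose 2)"
proof -
  let ?L = "line_graph_edges E"
  have finE: "finite E" and finV: "finite V"
    using assms simple_graph_finite_edges unfolding simple_graph_def by auto
  have "?L \<subseteq> Pow E" unfolding line_graph_edges_def by auto
  then have finL: "finite ?L" using finE finite_subset by blast
  have "card ?L = (\<Sum>P\<in>?L. card {v \<in> V. v \<in> \<Inter>P})"
    using card_common_vertices_line_graph_edge[OF assms] by simp
  also have "\<dots> = (\<Sum>P\<in>?L. \<Sum>v\<in>V. if v \<in> \<Inter>P then 1 else 0)"
    using finV by (simp add: sum.If_cases Int_def)
  also have "\<dots> = (\<Sum>v\<in>V. \<Sum>P\<in>?L. if v \<in> \<Inter>P then 1 else 0)"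
    by (rule sum.swap)
  also have "\<dots> = (\<Sum>v\<in>V. card {P \<in> ?L. v \<in> \<Inter>P})"
    using finL by (simp add: sum.If_cases Int_def)
  also have "\<dots> = (\<Sum>v\<in>V. degree E v choose 2)"
    unfolding line_graph_edges_through degree_def using finE by (simp add: n_subsets)
  finally show ?thesis .
qed

section \<open>Cycles\<close>

lemma nonbacktracking_walk:
  assumes G: "simple_graph V E" and deg: "\<And>x. reach E a x \<Longrightarrow> degree E x \<ge> 2"
  obtains w where "w 0 = a" "\<And>n. {w n, w (Suc n)} \<in> E" "\<And>n. w (Suc (Suc n)) \<noteq> w n"
proof -
  \<comment> \<open>The state is the pair (previous vertex, current vertex).\<close>
  let ?P = "\<lambda>n s. reach E a (snd s) \<and> (n = 0 \<longrightarrow> s = (a, a))"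
  let ?Q = "\<lambda>n s s'. fst s' = snd s \<and> {snd s, snd s'} \<in> E \<and> snd s' \<noteq> fst s"
  have "\<exists>s'. ?P (Suc n) s' \<and> ?Q n s s'" if "?P n s" for n s
  proof -
    have r: "reach E a (snd s)" using that by simp
    obtain z where z: "{snd s, z} \<in> E" "z \<noteq> fst s"
      using degree_two_other_neighbour[OF G deg[OF r]] .
    from r z(1) have "reach E a z" by (rule rtranclp.rtrancl_into_rtrancl)
    with z show ?thesis by (intro exI[of _ "(snd s, z)"]) simp
  qed
  moreover have "?P 0 (a, a)" by simp
  ultimately obtain f where f: "\<And>n. ?P n (f n) \<and> ?Q n (f n) (f (Suc n))"
    using dependent_nat_choice[of ?P ?Q] by blast
  show ?thesis
  proof
    show "snd (f 0) = a" using f[of 0] by simp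
    show "{snd (f n), snd (f (Suc n))} \<in> E" for n using f[of n] by simp
    show "snd (f (Suc (Suc n))) \<noteq> snd (f n)" for n using f[of n] f[of "Suc n"] by simp
  qed
qed

text \<open>The first return of a non-backtracking walk closes a cycle of length at least three.\<close>

lemma nonbacktracking_walk_cycle_edge:
  assumes G: "simple_graph V E" and fin: "finite (range w)"
    and walk: "\<And>n. {w n, w (Suc n)} \<in> E" and nb: "\<And>n. w (Suc (Suc n)) \<noteq> w n"
  obtains p q where "{p, q} \<in> E" "p \<in> range w" "reach (E - {{p, q}}) q p"
proof -
  have "\<not> inj w" using fin finite_imageD by blast
  then have rep: "\<exists>j. \<exists>i<j. w i = w j" unfolding inj_def by (metis linorder_neqE_nat)
  define J where "J = (LEAST j. \<exists>i<j. w i = w j)"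
  obtain I where I: "I < J" "w I = w J" using LeastI_ex[OF rep] unfolding J_def by blast
  have distinct: "w k \<noteq> w l" if "k < l" "l < J" for k l
    using not_less_Least[of l "\<lambda>j. \<exists>i<j. w i = w j"] that unfolding J_def by blast
  have "J \<noteq> Suc I" using walk[of I] I simple_graph_edgeD(1)[OF G] by auto
  moreover have "J \<noteq> Suc (Suc I)" using nb[of I] I by auto
  ultimately have J: "I + 3 \<le> J" using I by linarith
  define p q where "p = w (J - 1)" and "q = w I"
  have "{p, q} \<in> E" using walk[of "J - 1"] J I unfolding p_def q_def by (simp add: insert_commute)
  moreover have "{w k, w (Suc k)} \<in> E - {{p, q}}" if "I \<le> k" "k < J - 1" for k
  proof -
    have "w k \<noteq> p" using distinct[of k "J - 1"] that unfolding p_def by simp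
    moreover have "w k \<noteq> q \<or> w (Suc k) \<noteq> p"
    proof (cases "k = I")
      case True
      then show ?thesis using distinct[of "Suc I" "J - 1"] J unfolding p_def by simp
    next
      case False
      then have "I < k" "k < J" using that by auto
      then show ?thesis using distinct[of I k] unfolding q_def by simp
    qed
    ultimately show ?thesis using walk[of k] by (auto simp: doubleton_eq_iff)
  qed
  then have "reach (E - {{p, q}}) q p" unfolding p_def q_def using J by (intro reach_walk) auto
  ultimately show ?thesis using that unfolding p_def by blast
qed

lemma cycle_edge_in_component:
  assumes G: "simple_graph V E" and a: "a \<in> V" and deg: "\<And>x. reach E a x \<Longrightarrow> degree E x \<ge> 2"
  obtains p q where "{p, q} \<in> E" "reach E a p" "reach (E - {{p, q}}) q p"
proof -
  obtain w where w: "w 0 = a" "\<And>n. {w n, w (Suc n)} \<in> E" "\<And>n. w (Suc (Suc n)) \<noteq> w n"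
    using nonbacktracking_walk[OF G deg] by blast
  have reach_w: "reach E a (w n)" for n using reach_walk[of 0 n w E] w by simp
  then have "range w \<subseteq> V" using reach_closed[OF G a] by blast
  then have "finite (range w)" using G finite_subset unfolding simple_graph_def by blast
  from nonbacktracking_walk_cycle_edge[OF G this w(2,3)]
  obtain p q where "{p, q} \<in> E" "p \<in> range w" "reach (E - {{p, q}}) q p" .
  then show ?thesis using that reach_w by blast
qed

section \<open>Switching two edges\<close>

lemma card_filter_doubleton:
  assumes "A \<noteq> B"
  shows "card {e \<in> {A, B}. P e} = of_bool (P A) + of_bool (P B)"
proof -
  have "{e \<in> {A, B}. P e} = (if P A then {A} else {}) \<union> (if P B then {B} else {})" by auto
  then show ?thesis using assms by simp
qed

lemma degree_exchange_edges:
  assumes "finite E" "finite F'" "F \<subseteq> E" "F' \<inter> E = {}"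
  shows "degree (F' \<union> (E - F)) v + card {e \<in> F. v \<in> e} = degree E v + card {e \<in> F'. v \<in> e}"
proof -
  have "{e \<in> F' \<union> (E - F). v \<in> e} = {e \<in> F'. v \<in> e} \<union> {e \<in> E - F. v \<in> e}"
    and "{e \<in> E. v \<in> e} = {e \<in> F. v \<in> e} \<union> {e \<in> E - F. v \<in> e}"
    using assms(3) by auto
  moreover have "finite F" using assms(1,3) by (rule finite_subset[rotated])
  ultimately show ?thesis
    using assms unfolding degree_def by (simp add: card_Un_disjoint disjoint_iff)
qed

definition switch_edges :: "nat \<Rightarrow> nat \<Rightarrow> nat \<Rightarrow> nat \<Rightarrow> nat set set \<Rightarrow> nat set set" where
  "switch_edges p q c d E = {{p, c}, {q, d}} \<union> (E - {{p, q}, {c, d}})"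

text \<open>Since pq lies on a cycle, p and q stay linked after the switch, so no pair of vertices
  gets separated.\<close>

context
  fixes V E p q c d
  assumes G: "simple_graph V E" and pq: "{p, q} \<in> E" and cd: "{c, d} \<in> E"
    and cycle: "reach (E - {{p, q}}) q p" and unlinked: "\<not> reach E p c"
begin

private lemma switch_unlinked: "\<not> reach E p c" "\<not> reach E p d" "\<not> reach E q c" "\<not> reach E q d"
proof -
  have "reach E p q" using reach_sym reach_mono[OF _ cycle] by blast
  moreover have "reach E d c" using reach_sym reach_edge[OF cd] by blast
  ultimately show "\<not> reach E p c" "\<not> reach E p d" "\<not> reach E q c" "\<not> reach E q d"
    using unlinked by (meson rtranclp_trans)+
qed

private lemma switch_distinct: "p \<noteq> q" "c \<noteq> d" "p \<noteq> c" "p \<noteq> d" "q \<noteq> c" "q \<noteq> d"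
  using simple_graph_edgeD(1)[OF G pq] simple_graph_edgeD(1)[OF G cd] switch_unlinked by auto

lemma simple_graph_switch_edges: "simple_graph V (switch_edges p q c d E)"
  using G simple_graph_edgeD(2,3)[OF G pq] simple_graph_edgeD(2,3)[OF G cd] switch_distinct
  unfolding switch_edges_def simple_graph_def by auto

lemma card_switch_edges: "card (switch_edges p q c d E) = card E"
proof -
  have "{p, c} \<notin> E" "{q, d} \<notin> E" using switch_unlinked reach_edge by blast+
  moreover have "{p, q} \<noteq> {c, d}" "{p, c} \<noteq> {q, d}" using switch_distinct by (auto simp: doubleton_eq_iff)
  moreover have "card (E - {{p, q}, {c, d}}) = card E - 2"
    using calculation pq cd simple_graph_finite_edges[OF G] by (simp add: card_Diff_subset)
  moreover have "card E \<ge> 2"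
    using calculation pq cd card_mono[OF simple_graph_finite_edges[OF G], of "{{p, q}, {c, d}}"] by simp
  ultimately show ?thesis
    unfolding switch_edges_def using simple_graph_finite_edges[OF G] by (simp add: card_insert_if)
qed

lemma degree_switch_edges: "degree (switch_edges p q c d E) v = degree E v"
proof -
  have new: "{{p, c}, {q, d}} \<inter> E = {}" using switch_unlinked reach_edge by blast
  have ne: "{p, q} \<noteq> {c, d}" "{p, c} \<noteq> {q, d}"
    using switch_distinct by (auto simp: doubleton_eq_iff)
  have "card {e \<in> {{p, q}, {c, d}}. v \<in> e} = card {e \<in> {{p, c}, {q, d}}. v \<in> e}"
    unfolding card_filter_doubleton[OF ne(1)] card_filter_doubleton[OF ne(2)]
    using switch_distinct by auto
  with new show ?thesis
    unfolding switch_edges_def using degree_exchange_edges[of E "{{p, c}, {q, d}}" "{{p, q}, {c, d}}" v] pq cd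
      simple_graph_finite_edges[OF G] by simp
qed

lemma card_unlinked_pairs_switch_edges:
  "card (unlinked_pairs V (switch_edges p q c d E)) < card (unlinked_pairs V E)"
proof -
  let ?E' = "{{p, c}, {q, d}} \<union> (E - {{p, q}, {c, d}})"
  have "reach (E - {{p, q}, {c, d}}) q p"
  proof -
    have "reach ((E - {{p, q}}) - {{c, d}}) q p"
    proof (rule reach_Diff_edge[OF cycle])
      fix z assume "reach (E - {{p, q}}) q z"
      then have "reach E q z" by (rule reach_mono[rotated]) blast
      then show "z \<notin> {c, d}" using switch_unlinked by auto
    qed
    then show ?thesis by (simp add: Diff_insert2[symmetric])
  qed
  then have qp: "reach ?E' q p" by (rule reach_mono[rotated]) blast
  have pc: "reach ?E' p c" and qd: "reach ?E' q d" by (rule reach_edge, simp)+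
  have cd': "reach ?E' c d"
    using rtranclp_trans[OF rtranclp_trans[OF reach_sym[OF pc] reach_sym[OF qp]] qd] .
  have edges: "reach ?E' x y" if "{x, y} \<in> E" for x y
  proof (cases "{x, y} \<in> ?E'")
    case True
    then show ?thesis by (rule reach_edge)
  next
    case False
    with that have "{x, y} = {p, q} \<or> {x, y} = {c, d}" by blast
    then consider "x = p" "y = q" | "x = q" "y = p" | "x = c" "y = d" | "x = d" "y = c"
      by (auto simp: doubleton_eq_iff)
    then show ?thesis using cd' reach_sym[OF cd'] qp reach_sym[OF qp] by cases simp_all
  qed
  have lift: "reach ?E' x y" if "x \<in> V" "y \<in> V" "reach E x y" for x y
    using reach_lift[of E ?E', OF edges that(3)] .
  have "finite V" using G unfolding simple_graph_def by blast
  from card_unlinked_pairs_less[OF this order_refl lift _ _ unlinked pc]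
  show ?thesis unfolding switch_edges_def using simple_graph_edgeD(2)[OF G pq] simple_graph_edgeD(2)[OF G cd] by blast
qed

end

section \<open>Identifying two vertices\<close>

definition identify :: "nat \<Rightarrow> nat \<Rightarrow> nat \<Rightarrow> nat" where
  "identify u v x = (if x = v then u else x)"

definition identify_vertices :: "nat \<Rightarrow> nat \<Rightarrow> nat set set \<Rightarrow> nat set set" where
  "identify_vertices u v = image (image (identify u v))"

lemma mem_image_identify_iff:
  "y \<in> identify u v ` e \<longleftrightarrow> (if y = u then u \<in> e \<or> v \<in> e else y \<noteq> v \<and> y \<in> e)"
  unfolding identify_def by (auto simp: image_iff)

context
  fixes V E u v
  assumes G: "simple_graph V E" and u: "u \<in> V" and v: "v \<in> V" and unlinked: "\<not> reach E u v"
begin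

private lemma identify_distinct: "u \<noteq> v"
  using unlinked by auto

private lemma identify_not_both:
  assumes e: "e \<in> E"
  shows "u \<notin> e \<or> v \<notin> e"
proof (rule ccontr)
  assume "\<not> (u \<notin> e \<or> v \<notin> e)"
  then have "u \<in> e" "v \<in> e" by auto
  moreover obtain w where "e = {u, w}" using simple_graph_edge_doubleton[OF G e \<open>u \<in> e\<close>] .
  ultimately have "{u, v} \<in> E" using e identify_distinct by auto
  with unlinked reach_edge show False by blast
qed

private lemma inj_on_identify: "inj_on (image (identify u v)) E"
proof -
  \<comment> \<open>An edge vy never becomes an existing edge uy, since then u, y, v would be linked.\<close>
  define \<psi> where "\<psi> f = (if f \<in> E then f else insert v (f - {u}))" for f
  have "\<psi> (identify u v ` e) = e" if e: "e \<in> E" for e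
  proof (cases "v \<in> e")
    case False
    then have "identify u v ` e = e" by (auto simp: identify_def image_iff)
    then show ?thesis using e unfolding \<psi>_def by simp
  next
    case True
    obtain y where y: "e = {v, y}" "y \<noteq> v" using simple_graph_edge_doubleton[OF G e True] .
    have "y \<noteq> u" using identify_not_both[OF e] y by auto
    have "{u, y} \<notin> E"
    proof
      assume "{u, y} \<in> E"
      then have "reach E u y" by (rule reach_edge)
      moreover have "reach E y v" using e y reach_edge[of y v E] by (simp add: insert_commute)
      ultimately have "reach E u v" by (rule rtranclp_trans)
      with unlinked show False ..
    qed
    moreover have "identify u v ` e = {u, y}" using y by (auto simp: identify_def)
    ultimately show ?thesis unfolding \<psi>_def using y \<open>y \<noteq> u\<close> by auto
  qed
  then show ?thesis by (rule inj_on_inverseI)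
qed

lemma card_identify_vertices: "card (identify_vertices u v E) = card E"
  unfolding identify_vertices_def using inj_on_identify by (rule card_image)

lemma simple_graph_identify_vertices: "simple_graph (V - {v}) (identify_vertices u v E)"
proof -
  have "f \<subseteq> V - {v} \<and> card f = 2" if f: "f \<in> identify_vertices u v E" for f
  proof -
    obtain e where e: "e \<in> E" "f = identify u v ` e" using f unfolding identify_vertices_def by blast
    have "card e = 2" "e \<subseteq> V" using G e(1) unfolding simple_graph_def by auto
    then obtain x y where xy: "e = {x, y}" "x \<noteq> y" "x \<in> V" "y \<in> V"
      unfolding card_2_iff by auto
    then have "identify u v x \<noteq> identify u v y"
      using identify_not_both[OF e(1)] by (auto simp: identify_def)
    moreover have "identify u v x \<in> V - {v}" "identify u v y \<in> V - {v}"
      using xy u identify_distinct by (auto simp: identify_def)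
    moreover have "f = {identify u v x, identify u v y}" using e(2) xy(1) by (simp only: image_insert image_empty)
    ultimately show ?thesis by simp
  qed
  then show ?thesis using G unfolding simple_graph_def by blast
qed

private lemma degree_identify_vertices: "degree (identify_vertices u v E) x = card {e \<in> E. x \<in> identify u v ` e}"
proof -
  have "{f \<in> identify_vertices u v E. x \<in> f} = image (identify u v) ` {e \<in> E. x \<in> identify u v ` e}"
    unfolding identify_vertices_def by auto
  moreover have "inj_on (image (identify u v)) {e \<in> E. x \<in> identify u v ` e}"
    using inj_on_identify by (rule inj_on_subset) auto
  ultimately show ?thesis unfolding degree_def by (simp add: card_image)
qed

lemma degree_identify_vertices_merged:
  "degree (identify_vertices u v E) u = degree E u + degree E v"
proof -
  have "{e \<in> E. u \<in> identify u v ` e} = {e \<in> E. u \<in> e} \<union> {e \<in> E. v \<in> e}"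
    by (auto simp: mem_image_identify_iff)
  moreover have "{e \<in> E. u \<in> e} \<inter> {e \<in> E. v \<in> e} = {}" using identify_not_both by auto
  ultimately show ?thesis
    using degree_identify_vertices[of u] simple_graph_finite_edges[OF G]
    unfolding degree_def by (simp add: card_Un_disjoint)
qed

lemma degree_identify_vertices_other:
  assumes "x \<noteq> u" "x \<noteq> v"
  shows "degree (identify_vertices u v E) x = degree E x"
proof -
  have "{e \<in> E. x \<in> identify u v ` e} = {e \<in> E. x \<in> e}"
    using assms by (auto simp: mem_image_identify_iff)
  then show ?thesis using degree_identify_vertices[of x] unfolding degree_def by simp
qed

lemma card_line_graph_edges_identify_vertices:
  "card (line_graph_edges E) \<le> card (line_graph_edges (identify_vertices u v E))"
proof -
  let ?E' = "identify_vertices u v E"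
  let ?f = "\<lambda>z. degree E z choose 2" and ?f' = "\<lambda>z. degree ?E' z choose 2"
  have finV: "finite V" using G unfolding simple_graph_def by blast
  have "card (line_graph_edges E) = ?f v + (?f u + (\<Sum>z\<in>V - {v} - {u}. ?f z))"
    using card_line_graph_edges[OF G] sum.remove[OF finV v, of ?f] sum.remove[of "V - {v}" u ?f]
      finV u identify_distinct by simp
  also have "\<dots> \<le> ?f' u + (\<Sum>z\<in>V - {v} - {u}. ?f' z)"
    using choose_two_add_le[of "degree E u" "degree E v"]
      degree_identify_vertices_merged degree_identify_vertices_other by (simp add: add.commute)
  also have "\<dots> = card (line_graph_edges ?E')"
    using card_line_graph_edges[OF simple_graph_identify_vertices] sum.remove[of "V - {v}" u ?f']
      finV u identify_distinct by simp
  finally show ?thesis .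
qed

lemma card_unlinked_pairs_identify_vertices:
  assumes vw: "{v, w} \<in> E"
  shows "card (unlinked_pairs (V - {v}) (identify_vertices u v E)) < card (unlinked_pairs V E)"
proof -
  let ?E' = "identify_vertices u v E"
  have edges: "{identify u v x, identify u v y} \<in> ?E'" if "{x, y} \<in> E" for x y
  proof -
    have "{identify u v x, identify u v y} = identify u v ` {x, y}" by (simp only: image_insert image_empty)
    then show ?thesis using that unfolding identify_vertices_def by (simp only: image_eqI)
  qed
  have lift: "reach ?E' x y" if "x \<in> V - {v}" "y \<in> V - {v}" "reach E x y" for x y
    using reach_image[of E "identify u v" ?E', OF edges that(3)] that(1,2) by (simp add: identify_def)
  have w: "w \<in> V - {v}" using simple_graph_edgeD[OF G vw] by auto
  have "\<not> reach E u w"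
  proof
    assume "reach E u w"
    moreover have "reach E w v" using reach_edge[of w v E] vw by (simp add: insert_commute)
    ultimately have "reach E u v" by (rule rtranclp_trans)
    with unlinked show False ..
  qed
  moreover have "reach ?E' u w" using reach_edge[OF edges[OF vw]] w by (simp add: identify_def)
  moreover have "finite V" using G unfolding simple_graph_def by blast
  moreover have "u \<in> V - {v}" using u identify_distinct by blast
  ultimately show ?thesis using card_unlinked_pairs_less[OF _ Diff_subset lift _ w] by blast
qed

end

section \<open>Connecting an extremal graph\<close>

definition admissible :: "nat \<Rightarrow> nat set \<Rightarrow> nat set set \<Rightarrow> bool" where
  "admissible D V E \<longleftrightarrow> simple_graph V E \<and> (\<forall>x\<in>V. 1 \<le> degree E x \<and> degree E x \<le> D) \<and>
     (\<exists>x\<in>V. degree E x = D)"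

lemma admissible_iff_degrees:
  assumes G: "simple_graph V E" and "E \<noteq> {}"
  shows "admissible D V E \<longleftrightarrow> max_degree V E = D \<and> min_degree V E \<ge> 1"
proof -
  obtain e where "e \<in> E" using assms(2) by blast
  then have "card e = 2" "e \<subseteq> V" using G unfolding simple_graph_def by auto
  then have "V \<noteq> {}" by auto
  moreover have "finite V" using G unfolding simple_graph_def by blast
  ultimately have fin: "finite (degree E ` V)" and ne: "degree E ` V \<noteq> {}" by simp_all
  have "max_degree V E = D \<and> min_degree V E \<ge> 1 \<longleftrightarrow>
      (\<forall>x\<in>V. 1 \<le> degree E x \<and> degree E x \<le> D) \<and> (\<exists>x\<in>V. degree E x = D)"
    unfolding max_degree_def min_degree_def
    using Max_in[OF fin ne] Max_ge[OF fin] Min_ge_iff[OF fin ne] Max_eqI[OF fin]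
    by (smt (verit) image_iff)
  then show ?thesis using G unfolding admissible_def by blast
qed

lemma merge_step:
  assumes adm: "admissible D V E" and x: "x \<in> V" and y: "y \<in> V" and unlinked: "\<not> reach E x y"
    and deg: "degree E x + degree E y \<le> D"
  shows "\<exists>V' E'. admissible D V' E' \<and> card E' = card E \<and>
    card (line_graph_edges E) \<le> card (line_graph_edges E') \<and>
    card (unlinked_pairs V' E') < card (unlinked_pairs V E)"
proof (intro exI conjI)
  let ?E' = "identify_vertices x y E"
  have G: "simple_graph V E" and deg_pos: "degree E x \<ge> 1" "degree E y \<ge> 1"
    using adm x y unfolding admissible_def by auto
  note identify = simple_graph_identify_vertices card_identify_vertices
    degree_identify_vertices_merged degree_identify_vertices_other
  note identify = identify[OF G x y unlinked]
  show "card ?E' = card E" by (rule identify(2))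
  have "1 \<le> degree ?E' z \<and> degree ?E' z \<le> D" if "z \<in> V - {y}" for z
    using that adm deg identify(3,4) unfolding admissible_def by (cases "z = x") auto
  moreover have "\<exists>z\<in>V - {y}. degree ?E' z = D"
  proof -
    obtain z where z: "z \<in> V" "degree E z = D" using adm unfolding admissible_def by blast
    then have "z \<noteq> x" "z \<noteq> y" using deg deg_pos by auto
    then show ?thesis using z identify(4) by auto
  qed
  ultimately show "admissible D (V - {y}) ?E'" using identify(1) unfolding admissible_def by blast
  show "card (line_graph_edges E) \<le> card (line_graph_edges ?E')"
    by (rule card_line_graph_edges_identify_vertices[OF G x y unlinked])
  obtain w where "{y, w} \<in> E" using degree_pos_neighbour[OF G deg_pos(2)] .
  then show "card (unlinked_pairs (V - {y}) ?E') < card (unlinked_pairs V E)"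
    by (rule card_unlinked_pairs_identify_vertices[OF G x y unlinked])
qed

lemma switch_step:
  assumes adm: "admissible D V E" and a: "a \<in> V" and c: "c \<in> V" and unlinked: "\<not> reach E a c"
    and deg: "\<And>x. reach E a x \<Longrightarrow> degree E x \<ge> 2"
  shows "\<exists>V' E'. admissible D V' E' \<and> card E' = card E \<and>
    card (line_graph_edges E) \<le> card (line_graph_edges E') \<and>
    card (unlinked_pairs V' E') < card (unlinked_pairs V E)"
proof -
  have G: "simple_graph V E" using adm unfolding admissible_def by blast
  obtain p q where pq: "{p, q} \<in> E" "reach E a p" "reach (E - {{p, q}}) q p"
    using cycle_edge_in_component[OF G a deg] by blast
  have "degree E c \<ge> 1" using adm c unfolding admissible_def by blast
  then obtain d where cd: "{c, d} \<in> E" using degree_pos_neighbour[OF G] by blast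
  have p_c: "\<not> reach E p c"
  proof
    assume "reach E p c"
    with pq(2) have "reach E a c" by (rule rtranclp_trans)
    with unlinked show False ..
  qed
  note switch = simple_graph_switch_edges card_switch_edges degree_switch_edges card_unlinked_pairs_switch_edges
  note switch = switch[OF G pq(1) cd pq(3) p_c]
  let ?E' = "switch_edges p q c d E"
  have "admissible D V ?E'" using adm switch(1,3) unfolding admissible_def by simp
  moreover have "card (line_graph_edges ?E') = card (line_graph_edges E)"
    using card_line_graph_edges[OF G] card_line_graph_edges[OF switch(1)] switch(3) by simp
  ultimately show ?thesis using switch(2,4) by (intro exI[of _ V] exI[of _ ?E']) simp
qed

text \<open>If two components each contain a vertex of degree at most one, merging these two vertices
  respects the degree bound D \<ge> 2; otherwise one component has minimum degree two, hence a cycle.\<close>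

lemma connect_step:
  assumes adm: "admissible D V E" and D: "D \<ge> 2" and disconnected: "\<not> connected_graph V E"
  shows "\<exists>V' E'. admissible D V' E' \<and> card E' = card E \<and>
    card (line_graph_edges E) \<le> card (line_graph_edges E') \<and>
    card (unlinked_pairs V' E') < card (unlinked_pairs V E)"
proof -
  have G: "simple_graph V E" using adm unfolding admissible_def by blast
  have "V \<noteq> {}" using adm unfolding admissible_def by blast
  then obtain a c where ac: "a \<in> V" "c \<in> V" "\<not> reach E a c"
    using disconnected unfolding connected_graph_def by blast
  show ?thesis
  proof (cases "\<exists>x y. reach E a x \<and> reach E c y \<and> degree E x + degree E y \<le> D")
    case True
    then obtain x y where xy: "reach E a x" "reach E c y" "degree E x + degree E y \<le> D" by blast
    have "\<not> reach E x y"
    proof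
      assume "reach E x y"
      with xy(1) have "reach E a y" by (rule rtranclp_trans)
      from this reach_sym[OF xy(2)] have "reach E a c" by (rule rtranclp_trans)
      with ac(3) show False ..
    qed
    then show ?thesis
      using merge_step[OF adm reach_closed[OF G ac(1) xy(1)] reach_closed[OF G ac(2) xy(2)]] xy(3)
      by blast
  next
    case False
    have "(\<forall>x. reach E a x \<longrightarrow> degree E x \<ge> 2) \<or> (\<forall>y. reach E c y \<longrightarrow> degree E y \<ge> 2)"
    proof (rule ccontr)
      assume "\<not> ?thesis"
      then obtain x y where "reach E a x" "\<not> degree E x \<ge> 2" "reach E c y" "\<not> degree E y \<ge> 2"
        by blast
      moreover from this(2,4) D have "degree E x + degree E y \<le> D" by linarith
      ultimately show False using False by blast
    qed
    moreover have "\<not> reach E c a" using ac(3) reach_sym by blast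
    ultimately show ?thesis using switch_step[OF adm ac] switch_step[OF adm ac(2,1)] by blast
  qed
qed

lemma connect_admissible:
  assumes "admissible D V E" "D \<ge> 2"
  shows "\<exists>V' E'. admissible D V' E' \<and> connected_graph V' E' \<and> card E' = card E \<and>
    card (line_graph_edges E) \<le> card (line_graph_edges E')"
  using assms
proof (induction "card (unlinked_pairs V E)" arbitrary: V E rule: less_induct)
  case less
  show ?case
  proof (cases "connected_graph V E")
    case False
    then obtain V' E' where step: "admissible D V' E'" "card E' = card E"
      "card (line_graph_edges E) \<le> card (line_graph_edges E')"
      "card (unlinked_pairs V' E') < card (unlinked_pairs V E)"
      using connect_step[OF less.prems] by blast
    then show ?thesis using less.hyps[OF step(4) step(1) less.prems(2)] by (metis le_trans)
  qed (use less.prems in blast)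
qed

text \<open>Every vertex other than a root r has a parent strictly closer to r; the edges to the
  parents are distinct.\<close>

lemma connected_card_vertices_le:
  assumes G: "simple_graph V E" and C: "connected_graph V E"
  shows "card V \<le> card E + 1"
proof -
  let ?A = "\<lambda>x y. {x, y} \<in> E"
  obtain r where r: "r \<in> V" using C unfolding connected_graph_def by blast
  define dist where "dist v = (LEAST n. (?A ^^ n) r v)" for v
  have dist: "(?A ^^ dist v) r v" if "v \<in> V" for v
  proof -
    have "\<exists>n. (?A ^^ n) r v" using C r that unfolding connected_graph_def rtranclp_power by blast
    then show ?thesis unfolding dist_def by (rule LeastI_ex)
  qed
  have "\<exists>w. ?A w v \<and> dist w < dist v" if v: "v \<in> V - {r}" for v
  proof -
    have "dist v \<noteq> 0" using dist[of v] v by (metis DiffE relpowp_0_E singletonI)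
    then have "(?A ^^ Suc (dist v - 1)) r v" using dist[of v] v by simp
    then obtain w where "(?A ^^ (dist v - 1)) r w" "?A w v" by (rule relpowp_Suc_E)
    moreover from this(1) have "dist w \<le> dist v - 1" unfolding dist_def by (rule Least_le)
    ultimately show ?thesis using \<open>dist v \<noteq> 0\<close> by (intro exI[of _ w]) simp
  qed
  then obtain parent
    where parent: "\<And>v. v \<in> V - {r} \<Longrightarrow> ?A (parent v) v \<and> dist (parent v) < dist v"
    by metis
  have "inj_on (\<lambda>v. {parent v, v}) (V - {r})"
  proof (rule inj_onI)
    fix v1 v2 assume v: "v1 \<in> V - {r}" "v2 \<in> V - {r}" and eq: "{parent v1, v1} = {parent v2, v2}"
    show "v1 = v2"
    proof (rule ccontr)
      assume "v1 \<noteq> v2"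
      then have "parent v1 = v2" "parent v2 = v1" using eq by (auto simp: doubleton_eq_iff)
      then show False using parent[OF v(1)] parent[OF v(2)] by simp
    qed
  qed
  moreover have "(\<lambda>v. {parent v, v}) ` (V - {r}) \<subseteq> E" using parent by blast
  ultimately have "card (V - {r}) \<le> card E"
    using card_inj_on_le simple_graph_finite_edges[OF G] by blast
  then show ?thesis using r G unfolding simple_graph_def by (simp add: card_Diff_singleton)
qed

lemma inj_on_parent_edges:
  fixes parent :: "'a::order \<Rightarrow> 'a"
  assumes "\<And>k. k \<in> K \<Longrightarrow> parent k < k"
  shows "inj_on (\<lambda>k. {parent k, k}) K"
proof (rule inj_onI)
  fix k l assume kl: "k \<in> K" "l \<in> K" "{parent k, k} = {parent l, l}"
  show "k = l"
  proof (rule ccontr)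
    assume "k \<noteq> l"
    then have "k = parent l" "l = parent k" using kl(3) by (auto simp: doubleton_eq_iff)
    then show False using assms[OF kl(1)] assms[OF kl(2)] by auto
  qed
qed

lemma degree_parent_edges:
  assumes "\<And>k. k \<in> K \<Longrightarrow> parent k < k"
  shows "degree ((\<lambda>k. {parent k, k}) ` K) x = card {k \<in> K. x = parent k \<or> x = k}"
proof -
  have "{e \<in> (\<lambda>k. {parent k, k}) ` K. x \<in> e} =
      (\<lambda>k. {parent k, k}) ` {k \<in> K. x = parent k \<or> x = k}"
    by auto
  moreover have "inj_on (\<lambda>k. {parent k, k}) {k \<in> K. x = parent k \<or> x = k}"
    using inj_on_parent_edges[OF assms] by (rule inj_on_subset) auto
  ultimately show ?thesis unfolding degree_def by (simp add: card_image)
qed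

text \<open>A broom: the star with centre 0 and leaves 1, ..., D, followed by the path D, D+1, ..., N.\<close>

lemma admissible_broom:
  assumes "D \<le> N" "2 \<le> D"
  shows "\<exists>V E. admissible D V E \<and> card E = N"
proof -
  define parent where "parent k = (if k \<le> D then 0 else k - 1)" for k :: nat
  define E where "E = (\<lambda>k. {parent k, k}) ` {1..N}"
  have parent_less: "parent k < k" if "k \<in> {1..N}" for k using that unfolding parent_def by auto
  have "{parent k, k} \<subseteq> {0..N} \<and> card {parent k, k} = 2" if "k \<in> {1..N}" for k
    using parent_less[of k] that by auto
  then have G: "simple_graph {0..N} E" unfolding simple_graph_def E_def by auto
  note degree = degree_parent_edges[of "{1..N}" parent, OF parent_less, folded E_def]
  have "parent k = 0 \<longleftrightarrow> k \<le> D" if "k \<ge> 1" for k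
    using that assms(2) unfolding parent_def by auto
  then have "{k \<in> {1..N}. 0 = parent k \<or> 0 = k} = {1..D}" using assms(1) by force
  then have centre: "degree E 0 = D" using degree by simp
  have path: "1 \<le> degree E x \<and> degree E x \<le> 2" if x: "x \<in> {1..N}" for x
  proof -
    have "{k \<in> {1..N}. x = parent k \<or> x = k} \<subseteq> {x, Suc x}"
      using x unfolding parent_def by auto
    from card_mono[OF _ this] have "degree E x \<le> 2" using degree[of x] by (simp add: card_insert_if)
    moreover have "{x} \<subseteq> {k \<in> {1..N}. x = parent k \<or> x = k}" using x by simp
    from card_mono[OF _ this] have "degree E x \<ge> 1" using degree[of x] by simp
    ultimately show ?thesis by simp
  qed
  have "1 \<le> degree E x \<and> degree E x \<le> D" if "x \<in> {0..N}" for x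
    using that centre path[of x] assms(2) by (cases "x = 0") auto
  then have "admissible D {0..N} E" unfolding admissible_def using G centre by auto
  moreover have "card E = N"
    using card_image[OF inj_on_parent_edges[of "{1..N}" parent, OF parent_less]]
    unfolding E_def by simp
  ultimately show ?thesis by blast
qed

lemma finite_line_graph_sizes:
  "finite {card (line_graph_edges E) | V E. admissible D V E \<and> card E = N}"
proof (rule finite_subset)
  show "{card (line_graph_edges E) | V E. admissible D V E \<and> card E = N} \<subseteq> {..2 ^ N}"
  proof
    fix s assume "s \<in> {card (line_graph_edges E) | V E. admissible D V E \<and> card E = N}"
    then obtain V E where s: "s = card (line_graph_edges E)" "admissible D V E" "card E = N"
      by blast
    then have "finite E" using simple_graph_finite_edges unfolding admissible_def by blast
    moreover have "line_graph_edges E \<subseteq> Pow E" unfolding line_graph_edges_def by auto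
    ultimately have "s \<le> card (Pow E)" unfolding s(1) by (intro card_mono) simp_all
    then show "s \<in> {..2 ^ N}" using \<open>finite E\<close> s(3) by (simp add: card_Pow)
  qed
qed simp

lemma f_max_eq_Max:
  assumes "N \<ge> 1"
  shows "f_max N D = Max {card (line_graph_edges E) | V E. admissible D V E \<and> card E = N}"
proof -
  have "simple_graph V E \<and> card E = N \<and> max_degree V E = D \<and> min_degree V E \<ge> 1 \<longleftrightarrow>
      admissible D V E \<and> card E = N" for V E
    using admissible_iff_degrees[of V E D] assms unfolding admissible_def by force
  then show ?thesis unfolding f_max_def line_graph_def num_edges_def by simp
qed

lemma f_max_attained:
  assumes "D \<le> N" "2 \<le> D"
  obtains V E where "admissible D V E" "card E = N" "card (line_graph_edges E) = f_max N D"
proof -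
  let ?S = "{card (line_graph_edges E) | V E. admissible D V E \<and> card E = N}"
  have "?S \<noteq> {}" using admissible_broom[OF assms] by blast
  from Max_in[OF finite_line_graph_sizes this] have "f_max N D \<in> ?S"
    using f_max_eq_Max[of N D] assms by simp
  then obtain V E where "admissible D V E" "card E = N" "f_max N D = card (line_graph_edges E)"
    by blast
  then show ?thesis using that[of V E] by simp
qed

lemma line_graph_edges_le_f_max:
  assumes "admissible D V E" "card E = N" "N \<ge> 1"
  shows "card (line_graph_edges E) \<le> f_max N D"
proof -
  have "card (line_graph_edges E) \<in> {card (line_graph_edges E) | V E. admissible D V E \<and> card E = N}"
    using assms(1,2) by blast
  from Max_ge[OF finite_line_graph_sizes this] show ?thesis using f_max_eq_Max[OF assms(3)] by simp
qed

theorem mainTheorem10: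
  fixes N D :: nat
  assumes "N \<ge> D" and "D \<ge> 2"
  shows "\<exists>V E. simple_graph V E \<and> connected_graph V E \<and> num_edges V E = N \<and>
           max_degree V E = D \<and> card (snd (line_graph V E)) = f_max N D \<and>
           num_vertices V E \<le> N + 1"
proof -
  obtain V E where max: "admissible D V E" "card E = N" "card (line_graph_edges E) = f_max N D"
    using f_max_attained[OF assms] .
  then obtain V' E' where conn: "admissible D V' E'" "connected_graph V' E'" "card E' = N"
      and "f_max N D \<le> card (line_graph_edges E')"
    using connect_admissible[OF max(1) assms(2)] by auto
  moreover have "N \<ge> 1" using assms by linarith
  then have "card (line_graph_edges E') \<le> f_max N D" using line_graph_edges_le_f_max conn by blast
  moreover have G: "simple_graph V' E'" using conn(1) unfolding admissible_def by blast
  moreover have "E' \<noteq> {}" using conn(3) \<open>N \<ge> 1\<close> by auto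
  then have "max_degree V' E' = D" using admissible_iff_degrees[OF G] conn(1) by blast
  moreover have "card V' \<le> N + 1" using connected_card_vertices_le[OF G conn(2)] conn(3) by simp
  ultimately show ?thesis
    using conn unfolding line_graph_def num_edges_def num_vertices_def by auto
qed

end
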